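(* Let $m,k$ be positive integers and $p$ a prime with $(m,k-1)=1$ and $p=\mathrm{ind}_m(k)$; let $G=G(m,p,k)=\langle a,b;\ a^m=1,\ b^p=1,\ b^{-1}ab=a^k\rangle$, $R=\{k^j-1 \bmod m: j\in\mathbb{Z}_p\}$ and $L=\{1-k^j \bmod m: j\in\mathbb{Z}_p\}$. Then every nonzero element of $R^*$ and every nonzero element of $L^*$ is invertible in $\mathbb{Z}_m$, and both $\mathrm{P}(G)$ and $\Lambda(G)$ are complete (i.e. $\Sigma_G(R)$ and $\Sigma_G(L)$ are complete).
   Context: $\mathrm{ind}_m(k)$ is the least positive integer $d$ with $k^d\equiv 1\pmod m$. $S^*$ denotes the multiplicative subsemigroup of $\mathbb{Z}_m$ generated by $S$. Elements of $G$ are written uniquely as $a^ib^j$; $k_t=k^t-1\pmod m$. Commutators are $[x,y]=x^{-1}y^{-1}xy$; $(x)\rho(g)=[x,g]$, $(x)\lambda(g)=[g,x]$; maps are written on the right and composed left to right. $\mathrm{P}(G)$, $\Lambda(G)$ are the semigroups generated by all $\rho(g)$, resp. all $\lambda(g)$; they equal $\Sigma_G(R)$, $\Sigma_G(L)$. For $x,y\in\mathbb{Z}_m$, $(a^ib^j)\mu(x,y)=a^{xik^j-yk_j}$, $C(x,y)=\{\mu(x,yz):z\in\mathbb{Z}_m\}$. For $S\subseteq\mathbb{Z}_m$, $I(S)$ is the set of invertible elements of $S$; a base is $S$ with $0\in S$, $I(S)\neq\varnothing$; $\Sigma_G(S)$ is the semigroup generated by $\{\mu(s,z):s\in S,z\in\mathbb{Z}_m\}$.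 For $x\in S^*$, $Y(x)=\{s^*z: s^*\in S^*, z\in\mathbb{Z}_m, \exists s\in S,\ x\equiv ss^*\}$; the $x$-family $\{C(x,y):y\in Y(x)\}$ is complete if it contains $C(x,1)$, and $\Sigma_G(S)$ is complete if all $x$-families ($x\in S^*$) are complete. *)

theory Defs
  imports "HOL-Number_Theory.Number_Theory" "HOL-Library.FuncSet"
begin

text \<open>Elements a^i b^j of G(m,p,k) are represented by their normal-form exponent pairs (i,j),
  with i in Z_m = {0..<m} and j in Z_p = {0..<p}. Residues of Z_m are represented by integers in {0..<m}.\<close>

definition Gcar :: "nat \<Rightarrow> nat \<Rightarrow> (int \<times> int) set" where
  "Gcar m p = {0..<int m} \<times> {0..<int p}"

text \<open>(a^i b^j) mu(x,y) = a^(x i k^j - y k_j), with k_j = k^j - 1 mod m; the value is the exponent of a in Z_m.\<close>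
definition mu :: "nat \<Rightarrow> nat \<Rightarrow> nat \<Rightarrow> int \<Rightarrow> int \<Rightarrow> (int \<times> int \<Rightarrow> int)" where
  "mu m p k x y = restrict (\<lambda>(i, j). (x * i * int k ^ nat j - y * ((int k ^ nat j - 1) mod int m)) mod int m) (Gcar m p)"

definition Cset :: "nat \<Rightarrow> nat \<Rightarrow> nat \<Rightarrow> int \<Rightarrow> int \<Rightarrow> (int \<times> int \<Rightarrow> int) set" where
  "Cset m p k x y = {mu m p k x ((y * z) mod int m) | z. z \<in> {0..<int m}}"

inductive_set sgen :: "nat \<Rightarrow> int set \<Rightarrow> int set" for m :: nat and S :: "int set" where
  base: "s \<in> S \<Longrightarrow> s \<in> sgen m S"
| mult: "a \<in> sgen m S \<Longrightarrow> b \<in> sgen m S \<Longrightarrow> (a * b) mod int m \<in> sgen m S"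

definition Yset :: "nat \<Rightarrow> int set \<Rightarrow> int \<Rightarrow> int set" where
  "Yset m S x = {(t * z) mod int m | t z. t \<in> sgen m S \<and> z \<in> {0..<int m}
                   \<and> (\<exists>s\<in>S. [x = s * t] (mod int m))}"

definition family_complete :: "nat \<Rightarrow> nat \<Rightarrow> nat \<Rightarrow> int set \<Rightarrow> int \<Rightarrow> bool" where
  "family_complete m p k S x = (Cset m p k x 1 \<in> {Cset m p k x y | y. y \<in> Yset m S x})"

definition Sigma_complete :: "nat \<Rightarrow> nat \<Rightarrow> nat \<Rightarrow> int set \<Rightarrow> bool" where
  "Sigma_complete m p k S = (\<forall>x \<in> sgen m S. family_complete m p k S x)"

definition Rset :: "nat \<Rightarrow> nat \<Rightarrow> nat \<Rightarrow> int set" where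
  "Rset m p k = {(int k ^ j - 1) mod int m | j. j < p}"

definition Lset :: "nat \<Rightarrow> nat \<Rightarrow> nat \<Rightarrow> int set" where
  "Lset m p k = {(1 - int k ^ j) mod int m | j. j < p}"

definition invertible_mod :: "nat \<Rightarrow> int \<Rightarrow> bool" where
  "invertible_mod m x = (\<exists>y. [x * y = 1] (mod int m))"

end

theory Submission
  imports Defs
begin

text \<open>For \<open>0 < j < p\<close>, a common divisor \<open>d\<close> of \<open>k^j - 1\<close> and \<open>m\<close> has \<open>ord\<^sub>d(k)\<close> dividing
  both \<open>j\<close> and the prime \<open>p = ord\<^sub>m(k)\<close>, so \<open>k \<equiv> 1 (mod d)\<close> and \<open>d = 1\<close> because \<open>(m, k - 1) = 1\<close>.
  Hence \<open>R\<close> and \<open>L\<close> consist of \<open>0\<close> and units of \<open>\<int>\<^sub>m\<close>, and so do \<open>R\<^sup>*\<close> and \<open>L\<^sup>*\<close>; by Euler's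
  theorem a power of the unit \<open>\<plusminus>(k - 1)\<close> is \<open>1\<close>. Every \<open>x \<in> S\<^sup>*\<close> factors as \<open>x \<equiv> s t\<close> with
  \<open>s \<in> S\<close> and \<open>t \<in> S\<^sup>*\<close> a unit (\<open>t = 1\<close> if \<open>x \<in> S\<close>, and \<open>x = 0\<close> is \<open>0 \<cdot> 1\<close>), and then
  \<open>t \<cdot> t\<^sup>-\<^sup>1 = 1 \<in> Y(x)\<close>, so the \<open>x\<close>-family contains \<open>C(x,1)\<close>.\<close>

lemma one_less_if_prime_ord:
  fixes m k :: nat
  assumes "prime (ord m k)"
  shows "m > 1"
proof (rule ccontr)
  assume "\<not> m > 1"
  then consider "m = 0" | "m = 1" by linarith
  then show False
  proof cases
    case 1
    then have "ord m k = 0 \<or> ord m k = 1"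
      using ord_eq_0[of m k] ord_eq_Suc_0_iff[of m k] by (cases "k = 1") (auto simp: cong_def)
    then show False using assms by auto
  next
    case 2
    then have "ord m k = 1" using ord_eq_Suc_0_iff[of m k] by simp
    then show False using assms by simp
  qed
qed

lemma coprime_power_minus_one_if_not_ord_dvd:
  fixes m k j :: nat
  assumes "prime (ord m k)" "coprime m (k - 1)" "\<not> ord m k dvd j"
  shows "coprime (int k ^ j - 1) (int m)"
proof (cases "k = 0")
  case True
  moreover have "j > 0" using assms(3) by (rule contrapos_np) simp
  ultimately show ?thesis by (simp add: power_0_left)
next
  case False
  have "coprime (k ^ j - 1) m"
  proof (rule coprimeI)
    fix d assume d_power: "d dvd k ^ j - 1" and d_m: "d dvd m"
    have "[k ^ j = 1] (mod d)"
      using d_power cong_altdef_nat[of 1 "k ^ j" d] False by simp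
    then have "ord d k dvd j" by (rule ord_divides[THEN iffD1])
    have "[k ^ ord m k = 1] (mod d)" using ord cong_dvd_modulus_nat d_m by blast
    then have "ord d k dvd ord m k" by (rule ord_divides[THEN iffD1])
    with assms(1) have "ord d k = 1 \<or> ord d k = ord m k" by (simp add: prime_nat_iff)
    with \<open>ord d k dvd j\<close> assms(3) have "ord d k = 1" by auto
    then have "d dvd k - 1"
      using ord_eq_Suc_0_iff[of d k] cong_altdef_nat[of 1 k d] False by simp
    with assms(2) d_m show "is_unit d" by (rule coprime_common_divisor)
  qed
  then show ?thesis
    using False by (metis coprime_int_iff of_nat_1 of_nat_diff of_nat_power one_le_power less_one not_le)
qed

definition zero_or_unit_residues :: "nat \<Rightarrow> int set" where
  "zero_or_unit_residues m = {x. 0 \<le> x \<and> x < int m \<and> (x = 0 \<or> coprime x (int m))}"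

lemma mult_mod_mem_zero_or_unit_residues:
  assumes "m > 0" "a \<in> zero_or_unit_residues m" "b \<in> zero_or_unit_residues m"
  shows "(a * b) mod int m \<in> zero_or_unit_residues m"
  using assms by (auto simp: zero_or_unit_residues_def)

lemma sgen_subsetI:
  assumes "S \<subseteq> A" "\<And>a b. a \<in> A \<Longrightarrow> b \<in> A \<Longrightarrow> (a * b) mod int m \<in> A"
  shows "sgen m S \<subseteq> A"
proof
  fix x assume "x \<in> sgen m S"
  then show "x \<in> A" by induction (use assms in auto)
qed

lemma sgen_subset_zero_or_unit_residues:
  assumes "m > 0" "S \<subseteq> zero_or_unit_residues m"
  shows "sgen m S \<subseteq> zero_or_unit_residues m"
  using assms by (intro sgen_subsetI mult_mod_mem_zero_or_unit_residues)

lemma invertible_mod_if_coprime: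
  assumes "coprime x (int m)"
  shows "invertible_mod m x"
  unfolding invertible_mod_def using cong_modular_inverse1[OF assms] by blast

lemma power_mod_mem_sgen:
  assumes "a \<in> sgen m S" "a mod int m = a"
  shows "a ^ Suc n mod int m \<in> sgen m S"
proof (induction n)
  case 0
  then show ?case using assms by simp
next
  case (Suc n)
  then have "(a ^ Suc n mod int m * a) mod int m \<in> sgen m S"
    using assms(1) by (rule sgen.mult)
  then show ?case by (metis mod_mult_left_eq power_Suc2)
qed

lemma one_mem_sgen:
  assumes "m > 1" "u \<in> sgen m S" "u mod int m = u" "coprime u (int m)"
  shows "1 \<in> sgen m S"
proof -
  have "residues (int m)" using assms(1) by (simp add: residues_def)
  then have "[u ^ totient m = 1] (mod int m)"
    using residues.euler_theorem[of "int m" u] assms(4) by simp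
  moreover obtain n where "totient m = Suc n"
    using assms(1) by (metis gr0_implies_Suc totient_gt_0_iff zero_less_one less_trans)
  ultimately show ?thesis
    using power_mod_mem_sgen[OF assms(2,3), of n] assms(1) by (simp add: cong_def)
qed

lemma sgen_cases:
  assumes "x \<in> sgen m S"
  shows "x \<in> S \<or> (\<exists>s\<in>S. \<exists>t\<in>sgen m S. x = (s * t) mod int m)"
  using assms
proof induction
  case (base s)
  then show ?case by blast
next
  case (mult a b)
  show ?case
  proof (cases "a \<in> S")
    case True
    then show ?thesis using mult.hyps(2) by blast
  next
    case False
    then obtain s t where "s \<in> S" "t \<in> sgen m S" "a = (s * t) mod int m"
      using mult.IH(1) by blast
    moreover have "(t * b) mod int m \<in> sgen m S"
      using \<open>t \<in> sgen m S\<close> mult.hyps(2) by (rule sgen.mult)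
    moreover have "(a * b) mod int m = (s * ((t * b) mod int m)) mod int m"
      using \<open>a = (s * t) mod int m\<close> by (simp add: mod_mult_left_eq mod_mult_right_eq mult.assoc)
    ultimately show ?thesis by blast
  qed
qed

lemma family_complete_if_unit_cofactor:
  assumes "m > 1" "s \<in> S" "t \<in> sgen m S" "coprime t (int m)" "[x = s * t] (mod int m)"
  shows "family_complete m p k S x"
proof -
  define z where "z = modular_inverse (int m) t"
  have "z \<in> {0..<int m}"
    using assms(1) by (simp add: z_def modular_inverse_int_nonneg modular_inverse_int_less)
  moreover have "(t * z) mod int m = 1"
    using cong_modular_inverse1[OF assms(4)] assms(1) by (simp add: z_def cong_def)
  ultimately have "1 \<in> Yset m S x"
    unfolding Yset_def using assms(2,3,5) by force
  then show ?thesis unfolding family_complete_def by force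
qed

lemma Sigma_complete_if_zero_or_unit_residues:
  assumes "m > 1" "S \<subseteq> zero_or_unit_residues m" "0 \<in> S" "1 \<in> sgen m S"
  shows "Sigma_complete m p k S"
  unfolding Sigma_complete_def
proof
  have sgen_S: "sgen m S \<subseteq> zero_or_unit_residues m"
    using assms(1,2) by (simp add: sgen_subset_zero_or_unit_residues)
  fix x assume "x \<in> sgen m S"
  from sgen_cases[OF this] show "family_complete m p k S x"
  proof
    assume "x \<in> S"
    then show ?thesis
      using family_complete_if_unit_cofactor[OF assms(1) _ assms(4)] by simp
  next
    assume "\<exists>s\<in>S. \<exists>t\<in>sgen m S. x = (s * t) mod int m"
    then obtain s t where st: "s \<in> S" "t \<in> sgen m S" "x = (s * t) mod int m" by blast
    show ?thesis
    proof (cases "t = 0")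
      case True
      then show ?thesis
        using family_complete_if_unit_cofactor[OF assms(1,3,4)] st(3) by simp
    next
      case False
      then have "coprime t (int m)"
        using st(2) sgen_S by (auto simp: zero_or_unit_residues_def)
      then show ?thesis
        using family_complete_if_unit_cofactor[OF assms(1) st(1,2)] st(3) by (simp add: cong_def)
    qed
  qed
qed

lemma invertible_and_Sigma_complete_if_zero_or_unit_residues:
  assumes "m > 1" "S \<subseteq> zero_or_unit_residues m" "0 \<in> S" "u \<in> S" "coprime u (int m)"
  shows "(\<forall>x \<in> sgen m S. x \<noteq> 0 \<longrightarrow> invertible_mod m x) \<and> Sigma_complete m p k S"
proof
  have sgen_S: "sgen m S \<subseteq> zero_or_unit_residues m"
    using assms(1,2) by (simp add: sgen_subset_zero_or_unit_residues)
  then show "\<forall>x \<in> sgen m S. x \<noteq> 0 \<longrightarrow> invertible_mod m x"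
    unfolding zero_or_unit_residues_def using invertible_mod_if_coprime by blast
  have "u mod int m = u"
    using assms(2,4) by (auto simp: zero_or_unit_residues_def)
  with assms(1,4,5) have "1 \<in> sgen m S"
    by (intro one_mem_sgen sgen.base)
  with assms(1-3) show "Sigma_complete m p k S"
    by (rule Sigma_complete_if_zero_or_unit_residues)
qed

lemma Rset_memI: "j < p \<Longrightarrow> (int k ^ j - 1) mod int m \<in> Rset m p k"
  unfolding Rset_def by auto

lemma Lset_memI: "j < p \<Longrightarrow> (1 - int k ^ j) mod int m \<in> Lset m p k"
  unfolding Lset_def by auto

lemma coprime_mod_mem_zero_or_unit_residues:
  assumes "m > 0" "coprime x (int m)"
  shows "x mod int m \<in> zero_or_unit_residues m"
  using assms by (simp add: zero_or_unit_residues_def)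

lemma coprime_power_minus_one_if_less_ord:
  fixes m k j :: nat
  assumes "prime (ord m k)" "coprime m (k - 1)" "0 < j" "j < ord m k"
  shows "coprime (int k ^ j - 1) (int m)"
proof -
  have "\<not> ord m k dvd j" using assms(3,4) dvd_imp_le by fastforce
  with assms(1,2) show ?thesis by (rule coprime_power_minus_one_if_not_ord_dvd)
qed

lemma Rset_subset_zero_or_unit_residues:
  assumes "prime (ord m k)" "coprime m (k - 1)"
  shows "Rset m (ord m k) k \<subseteq> zero_or_unit_residues m"
proof
  fix x assume "x \<in> Rset m (ord m k) k"
  then obtain j where j: "j < ord m k" "x = (int k ^ j - 1) mod int m"
    unfolding Rset_def by blast
  have "m > 0" using one_less_if_prime_ord[OF assms(1)] by simp
  show "x \<in> zero_or_unit_residues m"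
  proof (cases "j = 0")
    case True
    with j(2) \<open>m > 0\<close> show ?thesis by (simp add: zero_or_unit_residues_def)
  next
    case False
    with assms j(1) have "coprime (int k ^ j - 1) (int m)"
      by (simp add: coprime_power_minus_one_if_less_ord)
    with \<open>m > 0\<close> show ?thesis
      unfolding j(2) by (rule coprime_mod_mem_zero_or_unit_residues)
  qed
qed

lemma Lset_subset_zero_or_unit_residues:
  assumes "prime (ord m k)" "coprime m (k - 1)"
  shows "Lset m (ord m k) k \<subseteq> zero_or_unit_residues m"
proof
  fix x assume "x \<in> Lset m (ord m k) k"
  then obtain j where j: "j < ord m k" "x = (1 - int k ^ j) mod int m"
    unfolding Lset_def by blast
  have "m > 0" using one_less_if_prime_ord[OF assms(1)] by simp
  show "x \<in> zero_or_unit_residues m"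
  proof (cases "j = 0")
    case True
    with j(2) \<open>m > 0\<close> show ?thesis by (simp add: zero_or_unit_residues_def)
  next
    case False
    with assms j(1) have "coprime (int k ^ j - 1) (int m)"
      by (simp add: coprime_power_minus_one_if_less_ord)
    then have "coprime (1 - int k ^ j) (int m)"
      by (metis coprime_minus_left_iff minus_diff_eq)
    with \<open>m > 0\<close> show ?thesis
      unfolding j(2) by (rule coprime_mod_mem_zero_or_unit_residues)
  qed
qed

theorem theorem6p5:
  fixes m k p :: nat
  assumes "m > 0" and "k > 0" and "prime p"
    and "coprime m (k - 1)" and "p = ord m k"
  shows "(\<forall>x \<in> sgen m (Rset m p k). x \<noteq> 0 \<longrightarrow> invertible_mod m x)
       \<and> (\<forall>x \<in> sgen m (Lset m p k). x \<noteq> 0 \<longrightarrow> invertible_mod m x)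
       \<and> Sigma_complete m p k (Rset m p k)
       \<and> Sigma_complete m p k (Lset m p k)"
proof -
  have prime_ord: "prime (ord m k)" using assms(3,5) by simp
  have "m > 1" using one_less_if_prime_ord[OF prime_ord] .
  have "1 < p" using prime_gt_1_nat[OF assms(3)] .
  have "coprime (int k - 1) (int m)"
    using assms(2,4) by (simp add: coprime_commute of_nat_diff flip: coprime_int_iff)
  moreover from this have "coprime (1 - int k) (int m)"
    by (metis coprime_minus_left_iff minus_diff_eq)
  ultimately have "coprime ((int k - 1) mod int m) (int m)" "coprime ((1 - int k) mod int m) (int m)"
    using \<open>m > 1\<close> by simp_all
  moreover have "Rset m p k \<subseteq> zero_or_unit_residues m" "Lset m p k \<subseteq> zero_or_unit_residues m"
    unfolding assms(5) using prime_ord assms(4)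
    by (simp_all add: Rset_subset_zero_or_unit_residues Lset_subset_zero_or_unit_residues)
  moreover have "0 \<in> Rset m p k" "(int k - 1) mod int m \<in> Rset m p k"
    "0 \<in> Lset m p k" "(1 - int k) mod int m \<in> Lset m p k"
    using Rset_memI[of 0 p k m] Rset_memI[of 1 p k m] Lset_memI[of 0 p k m] Lset_memI[of 1 p k m]
      \<open>1 < p\<close> by simp_all
  ultimately show ?thesis
    using invertible_and_Sigma_complete_if_zero_or_unit_residues[OF \<open>m > 1\<close>] by meson
qed

end
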